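(* Let $(X,d),(Y,\rho)\in\mathfrak U$. Then $X\cong Y$ if and only if there exists a bijection $F:X\to Y$ that preserves balls.
   Context: $\operatorname{Sp}(X)=\{d(x,y):x\neq y\}$; $\mathfrak U$ is the class of finite ultrametric spaces $X$ with $|\operatorname{Sp}(X)|=|X|-1$. For a metric space $X$ and $t\in X$: $B_r(t)=\{x:d(x,t)\le r\}$, $\operatorname{Sp}_t(X)=\{d(x,t):x\neq t\}$, $\mathbf B_X=\{B_r(t):t\in X,\ r\in\operatorname{Sp}_t(X)\}$. A map $F:X\to Y$ between metric spaces preserves balls if $F(Z)\in\mathbf B_Y$ for every $Z\in\mathbf B_X$ and $F^{-1}(W)\in\mathbf B_X$ for every $W\in\mathbf B_Y$. For a finite ultrametric space $X$ (with $X\cap\operatorname{Sp}(X)=\varnothing$, achievable up to isometry), the representing tree $T_X$ is the labelled rooted tree defined recursively: for $X=\{x\}$ a single node labelled $x$; for $|X|\ge2$ the root is labelled $\operatorname{diam}X$ and has one child for each class $X_i$ of the equivalence relation $x\sim y\iff d(x,y)<\operatorname{diam}X$, labelled $x$ if $X_i=\{x\}$ and otherwise labelled $\operatorname{diam}X_i$ with the recursively constructed tree for $X_i$ below it. $\overline{T}_X$ is $T_X$ with labels erased, and $X\cong Y$ means $\overline T_X$ and $\overline T_Y$ are isomorphic rooted trees. *)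

theory Defs
  imports Complex_Main
begin

definition ultrametric_on :: "'a set \<Rightarrow> ('a \<Rightarrow> 'a \<Rightarrow> real) \<Rightarrow> bool" where
  "ultrametric_on X d \<longleftrightarrow>
     (\<forall>x\<in>X. \<forall>y\<in>X. d x y \<ge> 0 \<and> (d x y = 0 \<longleftrightarrow> x = y) \<and> d x y = d y x) \<and>
     (\<forall>x\<in>X. \<forall>y\<in>X. \<forall>z\<in>X. d x z \<le> max (d x y) (d y z))"

definition Sp :: "'a set \<Rightarrow> ('a \<Rightarrow> 'a \<Rightarrow> real) \<Rightarrow> real set" where
  "Sp X d = {d x y | x y. x \<in> X \<and> y \<in> X \<and> x \<noteq> y}"

definition in_U :: "'a set \<Rightarrow> ('a \<Rightarrow> 'a \<Rightarrow> real) \<Rightarrow> bool" where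
  "in_U X d \<longleftrightarrow> X \<noteq> {} \<and> finite X \<and> ultrametric_on X d \<and> card (Sp X d) = card X - 1"

definition ball :: "'a set \<Rightarrow> ('a \<Rightarrow> 'a \<Rightarrow> real) \<Rightarrow> real \<Rightarrow> 'a \<Rightarrow> 'a set" where
  "ball X d r t = {x \<in> X. d x t \<le> r}"

definition Sp_at :: "'a set \<Rightarrow> ('a \<Rightarrow> 'a \<Rightarrow> real) \<Rightarrow> 'a \<Rightarrow> real set" where
  "Sp_at X d t = {d x t | x. x \<in> X \<and> x \<noteq> t}"

definition Balls :: "'a set \<Rightarrow> ('a \<Rightarrow> 'a \<Rightarrow> real) \<Rightarrow> 'a set set" where
  "Balls X d = {ball X d r t | t r. t \<in> X \<and> r \<in> Sp_at X d t}"

definition preserves_balls ::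
  "'a set \<Rightarrow> ('a \<Rightarrow> 'a \<Rightarrow> real) \<Rightarrow> 'b set \<Rightarrow> ('b \<Rightarrow> 'b \<Rightarrow> real) \<Rightarrow> ('a \<Rightarrow> 'b) \<Rightarrow> bool" where
  "preserves_balls X d Y \<rho> F \<longleftrightarrow>
     (\<forall>Z\<in>Balls X d. F ` Z \<in> Balls Y \<rho>) \<and> (\<forall>W\<in>Balls Y \<rho>. F -` W \<inter> X \<in> Balls X d)"

definition diam_fin :: "('a \<Rightarrow> 'a \<Rightarrow> real) \<Rightarrow> 'a set \<Rightarrow> real" where
  "diam_fin d Z = Max {d x y | x y. x \<in> Z \<and> y \<in> Z}"

text \<open>Nodes of the tree are identified with the subsets of X they represent (labels erased).\<close>
definition rt_children :: "('a \<Rightarrow> 'a \<Rightarrow> real) \<Rightarrow> 'a set \<Rightarrow> 'a set set" where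
  "rt_children d Z =
     (if card Z \<ge> 2 then Z // {(x, y). x \<in> Z \<and> y \<in> Z \<and> d x y < diam_fin d Z} else {})"

inductive_set rt_nodes :: "'a set \<Rightarrow> ('a \<Rightarrow> 'a \<Rightarrow> real) \<Rightarrow> 'a set set" for X d where
  root: "X \<in> rt_nodes X d"
| child: "Z \<in> rt_nodes X d \<Longrightarrow> W \<in> rt_children d Z \<Longrightarrow> W \<in> rt_nodes X d"

text \<open>X \<cong> Y: the unlabelled representing trees are isomorphic as rooted trees.\<close>
definition tree_iso ::
  "'a set \<Rightarrow> ('a \<Rightarrow> 'a \<Rightarrow> real) \<Rightarrow> 'b set \<Rightarrow> ('b \<Rightarrow> 'b \<Rightarrow> real) \<Rightarrow> bool" where
  "tree_iso X d Y \<rho> \<longleftrightarrow> (\<exists>\<phi>. bij_betw \<phi> (rt_nodes X d) (rt_nodes Y \<rho>) \<and> \<phi> X = Y \<and>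
     (\<forall>A\<in>rt_nodes X d. \<forall>B\<in>rt_nodes X d. B \<in> rt_children d A \<longleftrightarrow> \<phi> B \<in> rt_children \<rho> (\<phi> A)))"

end

theory Submission
  imports Defs
begin

text \<open>The nodes of the representing tree of a finite ultrametric space are exactly its balls
  together with its singletons, and a node is a child of another precisely when it is covered by
  it with respect to inclusion. Hence two representing trees are isomorphic iff the node families
  are isomorphic as posets under inclusion. Such a poset isomorphism sends singletons to
  singletons, so it is induced by a bijection of the points; and a bijection of the points maps
  nodes onto nodes iff it maps balls onto balls, i.e. iff it preserves balls.\<close>

lemma rt_children_subset: "B \<in> rt_children d A \<Longrightarrow> B \<subseteq> A"
  unfolding rt_children_def quotient_def by (auto split: if_splits)

lemma rt_children_eq_image:
  "2 \<le> card Z \<Longrightarrow> rt_children d Z = (\<lambda>s. {y \<in> Z. d s y < diam_fin d Z}) ` Z"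
  unfolding rt_children_def quotient_def by auto

lemma rt_nodes_trans: "W \<in> rt_nodes Z d \<Longrightarrow> Z \<in> rt_nodes X d \<Longrightarrow> W \<in> rt_nodes X d"
  by (induction rule: rt_nodes.induct) (auto intro: rt_nodes.child)

lemma rt_nodes_subset: "W \<in> rt_nodes Z d \<Longrightarrow> W \<subseteq> Z"
  by (induction rule: rt_nodes.induct) (auto dest: rt_children_subset)

lemma diam_fin_ge: "finite Z \<Longrightarrow> x \<in> Z \<Longrightarrow> y \<in> Z \<Longrightarrow> d x y \<le> diam_fin d Z"
  unfolding diam_fin_def by (rule Max_ge) (auto intro: finite_subset[of _ "case_prod d ` (Z \<times> Z)"])

lemma diam_fin_attained: "finite Z \<Longrightarrow> Z \<noteq> {} \<Longrightarrow> \<exists>x\<in>Z. \<exists>y\<in>Z. diam_fin d Z = d x y"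
proof -
  assume "finite Z" "Z \<noteq> {}"
  moreover have "{d x y | x y. x \<in> Z \<and> y \<in> Z} = case_prod d ` (Z \<times> Z)" by auto
  ultimately have "diam_fin d Z \<in> {d x y | x y. x \<in> Z \<and> y \<in> Z}"
    unfolding diam_fin_def by (intro Max_in) auto
  then show ?thesis by auto
qed

lemma tree_iso_image_rt_nodes:
  assumes bij: "bij_betw \<phi> (rt_nodes X d) (rt_nodes Y \<rho>)"
    and children: "\<And>A B. A \<in> rt_nodes X d \<Longrightarrow> B \<in> rt_nodes X d \<Longrightarrow>
                      B \<in> rt_children d A \<longleftrightarrow> \<phi> B \<in> rt_children \<rho> (\<phi> A)"
    and A: "A \<in> rt_nodes X d"
  shows "\<phi> ` rt_nodes A d = rt_nodes (\<phi> A) \<rho>"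
proof
  show "\<phi> ` rt_nodes A d \<subseteq> rt_nodes (\<phi> A) \<rho>"
  proof
    fix N assume "N \<in> \<phi> ` rt_nodes A d"
    then obtain B where B: "B \<in> rt_nodes A d" and N: "N = \<phi> B" by blast
    from B show "N \<in> rt_nodes (\<phi> A) \<rho>" unfolding N
    proof (induction rule: rt_nodes.induct)
      case (child Z W)
      have "Z \<in> rt_nodes X d" "W \<in> rt_nodes X d"
        using rt_nodes_trans[OF child.hyps(1) A] rt_nodes.child child.hyps(2) by blast+
      then show ?case using children child.hyps(2) child.IH by (blast intro: rt_nodes.child)
    qed (rule rt_nodes.root)
  qed
next
  show "rt_nodes (\<phi> A) \<rho> \<subseteq> \<phi> ` rt_nodes A d"
  proof
    fix N assume "N \<in> rt_nodes (\<phi> A) \<rho>"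
    then show "N \<in> \<phi> ` rt_nodes A d"
    proof (induction rule: rt_nodes.induct)
      case (child N' W)
      then obtain C where C: "C \<in> rt_nodes A d" and N': "N' = \<phi> C" by blast
      have CX: "C \<in> rt_nodes X d" using rt_nodes_trans[OF C A] .
      have "\<phi> A \<in> rt_nodes Y \<rho>" using bij A by (auto simp: bij_betw_def)
      then have "W \<in> rt_nodes Y \<rho>"
        using rt_nodes_trans[OF child.hyps(1)] child.hyps(2) by (blast intro: rt_nodes.child)
      then obtain B where B: "B \<in> rt_nodes X d" "W = \<phi> B"
        using bij by (auto simp: bij_betw_def)
      then have "B \<in> rt_children d C" using children[OF CX B(1)] child.hyps(2) N' by simp
      then show ?case using B(2) C by (blast intro: rt_nodes.child)
    qed (use rt_nodes.root in blast)
  qed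
qed

lemma inj_on_image_subset_iff:
  "inj_on f C \<Longrightarrow> A \<subseteq> C \<Longrightarrow> B \<subseteq> C \<Longrightarrow> f ` A \<subseteq> f ` B \<longleftrightarrow> A \<subseteq> B"
  unfolding inj_on_def by blast

definition covers :: "'a set set \<Rightarrow> 'a set \<Rightarrow> 'a set \<Rightarrow> bool" where
  "covers N A B \<longleftrightarrow> B \<subset> A \<and> (\<forall>C\<in>N. B \<subseteq> C \<longrightarrow> C \<subseteq> A \<longrightarrow> C = B \<or> C = A)"

lemma covers_order_iso:
  assumes bij: "bij_betw \<psi> N M"
    and mono: "\<And>A B. A \<in> N \<Longrightarrow> B \<in> N \<Longrightarrow> B \<subseteq> A \<longleftrightarrow> \<psi> B \<subseteq> \<psi> A"
    and "A \<in> N" "B \<in> N"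
  shows "covers N A B \<longleftrightarrow> covers M (\<psi> A) (\<psi> B)"
proof -
  have M: "M = \<psi> ` N" using bij by (simp add: bij_betw_def)
  have eq: "B = A \<longleftrightarrow> \<psi> B = \<psi> A" if "A \<in> N" "B \<in> N" for A B
    using mono[OF that] mono[OF that(2,1)] by blast
  show ?thesis
    unfolding covers_def M using assms(3,4) by (auto simp: psubset_eq mono eq)
qed

locale finite_ultrametric =
  fixes X :: "'a set" and d :: "'a \<Rightarrow> 'a \<Rightarrow> real"
  assumes finite: "finite X" and nonempty: "X \<noteq> {}" and ultrametric: "ultrametric_on X d"
begin

lemma d_nonneg: "x \<in> X \<Longrightarrow> y \<in> X \<Longrightarrow> 0 \<le> d x y"
  and d_eq_0_iff: "x \<in> X \<Longrightarrow> y \<in> X \<Longrightarrow> d x y = 0 \<longleftrightarrow> x = y"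
  and d_sym: "x \<in> X \<Longrightarrow> y \<in> X \<Longrightarrow> d x y = d y x"
  and d_ultra: "x \<in> X \<Longrightarrow> y \<in> X \<Longrightarrow> z \<in> X \<Longrightarrow> d x z \<le> max (d x y) (d y z)"
  using ultrametric unfolding ultrametric_on_def by blast+

lemma d_ultra_from:
  assumes "x \<in> X" "y \<in> X" "z \<in> X"
  shows "d x z \<le> max (d y x) (d y z)"
proof -
  have "d y x = d x y" using d_sym assms(1,2) by blast
  then show ?thesis using d_ultra[OF assms] by metis
qed

lemma diam_fin_attained_at:
  assumes "Z \<subseteq> X" "finite Z" "t \<in> Z"
  shows "\<exists>y\<in>Z. d t y = diam_fin d Z"
proof -
  obtain x y where xy: "x \<in> Z" "y \<in> Z" "diam_fin d Z = d x y"
    using diam_fin_attained[of Z d] assms by blast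
  have "d x y \<le> max (d t x) (d t y)" using d_ultra_from assms(1,3) xy(1,2) by blast
  moreover have "max (d t x) (d t y) \<le> diam_fin d Z"
    using diam_fin_ge[OF assms(2,3) xy(1)] diam_fin_ge[OF assms(2,3) xy(2)] by simp
  ultimately have "max (d t x) (d t y) = diam_fin d Z" using xy(3) by linarith
  then show ?thesis using xy(1,2) by (auto simp: max_def split: if_splits)
qed

lemma diam_fin_pos:
  assumes "Z \<subseteq> X" "finite Z" "2 \<le> card Z"
  shows "0 < diam_fin d Z"
proof -
  have "\<not> card Z \<le> Suc 0" using assms(3) by simp
  then obtain x y where xy: "x \<in> Z" "y \<in> Z" "x \<noteq> y"
    using card_le_Suc0_iff_eq[OF assms(2)] by blast
  then have "x \<in> X" "y \<in> X" using assms(1) by auto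
  then have "0 < d x y" using d_nonneg d_eq_0_iff xy(3) by (simp add: order_less_le)
  also have "d x y \<le> diam_fin d Z" using diam_fin_ge[OF assms(2) xy(1,2)] .
  finally show ?thesis .
qed

lemma rt_child_at:
  assumes "A \<subseteq> X" "2 \<le> card A" "t \<in> A"
  shows "{y \<in> A. d t y < diam_fin d A} \<in> rt_children d A"
    and "t \<in> {y \<in> A. d t y < diam_fin d A}"
    and "{y \<in> A. d t y < diam_fin d A} \<subset> A"
proof -
  have fin: "finite A" using assms(1) finite finite_subset by blast
  show "{y \<in> A. d t y < diam_fin d A} \<in> rt_children d A"
    using assms by (simp add: rt_children_eq_image)
  have "t \<in> X" using assms by auto
  then show "t \<in> {y \<in> A. d t y < diam_fin d A}"
    using diam_fin_pos[OF assms(1) fin assms(2)] d_eq_0_iff[OF \<open>t \<in> X\<close> \<open>t \<in> X\<close>] assms(3) by auto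
  obtain y where "y \<in> A" "d t y = diam_fin d A"
    using diam_fin_attained_at[OF assms(1) fin assms(3)] by blast
  then have "y \<notin> {y \<in> A. d t y < diam_fin d A}" by simp
  then show "{y \<in> A. d t y < diam_fin d A} \<subset> A" using \<open>y \<in> A\<close> by blast
qed

lemma rt_node_ball_char:
  "A \<in> rt_nodes X d \<Longrightarrow>
     A \<subseteq> X \<and> A \<noteq> {} \<and> (\<forall>t\<in>A. \<forall>y. y \<in> A \<longleftrightarrow> y \<in> X \<and> d y t \<le> diam_fin d A)"
proof (induction rule: rt_nodes.induct)
  case root
  show ?case using nonempty diam_fin_ge[OF finite] by auto
next
  case (child Z W)
  have ZX: "Z \<subseteq> X" and card: "2 \<le> card Z"
    using child.IH child.hyps(2) by (auto simp: rt_children_def split: if_splits)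
  obtain s where s: "s \<in> Z" and W: "W = {y \<in> Z. d s y < diam_fin d Z}"
    using child.hyps(2) rt_children_eq_image[OF card] by blast
  have sW: "s \<in> W" and WZ: "W \<subseteq> Z" using rt_child_at[OF ZX card s] W by auto
  have sX: "s \<in> X" and WX: "W \<subseteq> X" using s WZ ZX by auto
  have fW: "finite W" using WX finite finite_subset by blast
  have diam_less: "diam_fin d W < diam_fin d Z"
  proof -
    obtain a b where ab: "a \<in> W" "b \<in> W" "diam_fin d W = d a b"
      using diam_fin_attained[OF fW] sW by blast
    have "d a b \<le> max (d s a) (d s b)" using d_ultra_from sX ab WX by blast
    then show ?thesis using ab W by auto
  qed
  have "y \<in> W \<longleftrightarrow> y \<in> X \<and> d y t \<le> diam_fin d W" if t: "t \<in> W" for t y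
  proof
    assume "y \<in> W"
    then show "y \<in> X \<and> d y t \<le> diam_fin d W" using diam_fin_ge[OF fW _ t] WX by auto
  next
    assume "y \<in> X \<and> d y t \<le> diam_fin d W"
    then have yX: "y \<in> X" and yt: "d y t < diam_fin d Z" using diam_less by auto
    have tZ: "t \<in> Z" and tX: "t \<in> X" and st: "d s t < diam_fin d Z" using t W ZX by auto
    have "y \<in> Z" using child.IH tZ yX yt by auto
    moreover have "d s y \<le> max (d s t) (d t y)" "d t y = d y t"
      using d_ultra[OF sX tX yX] d_sym[OF tX yX] by blast+
    ultimately show "y \<in> W" using W st yt by auto
  qed
  then show ?case using WX sW by blast
qed

lemma rt_node_subset: "A \<in> rt_nodes X d \<Longrightarrow> A \<subseteq> X"
  and rt_node_nonempty: "A \<in> rt_nodes X d \<Longrightarrow> A \<noteq> {}"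
  and rt_node_finite: "A \<in> rt_nodes X d \<Longrightarrow> finite A"
  using rt_node_ball_char finite finite_subset by blast+

lemma rt_node_mem_iff:
  "A \<in> rt_nodes X d \<Longrightarrow> t \<in> A \<Longrightarrow> y \<in> A \<longleftrightarrow> y \<in> X \<and> d y t \<le> diam_fin d A"
  using rt_node_ball_char by blast

lemma rt_node_eq_ball: "A \<in> rt_nodes X d \<Longrightarrow> t \<in> A \<Longrightarrow> A = ball X d (diam_fin d A) t"
  unfolding ball_def using rt_node_mem_iff by blast

text \<open>Descend from \<open>Z\<close> through the children containing \<open>t\<close>: the first one whose diameter
  is at most \<open>r\<close> is the ball.\<close>
lemma ball_in_rt_nodes:
  "Z \<in> rt_nodes X d \<Longrightarrow> t \<in> Z \<Longrightarrow> 0 \<le> r \<Longrightarrow> r \<le> diam_fin d Z \<Longrightarrow> ball X d r t \<in> rt_nodes X d"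
proof (induction "card Z" arbitrary: Z rule: less_induct)
  case less
  have ZX: "Z \<subseteq> X" and fZ: "finite Z" using less.prems rt_node_subset rt_node_finite by auto
  have tX: "t \<in> X" using less.prems ZX by auto
  show ?case
  proof (cases "r = diam_fin d Z")
    case True
    then show ?thesis using rt_node_eq_ball less.prems(1,2) by metis
  next
    case False
    then have r_less: "r < diam_fin d Z" using less.prems by auto
    have card: "2 \<le> card Z"
    proof (rule ccontr)
      assume "\<not> 2 \<le> card Z"
      then have "Z = {t}" using fZ less.prems(2) card_le_Suc0_iff_eq[OF fZ] by fastforce
      then show False using r_less less.prems(3) d_eq_0_iff[OF tX tX] by (simp add: diam_fin_def)
    qed
    define W where "W = {y \<in> Z. d t y < diam_fin d Z}"
    have W_node: "W \<in> rt_nodes X d"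
      using rt_nodes.child[OF less.prems(1)] rt_child_at(1)[OF ZX card less.prems(2)] W_def by blast
    have tW: "t \<in> W" and "W \<subset> Z" using rt_child_at[OF ZX card less.prems(2)] W_def by auto
    then have card_less: "card W < card Z" using fZ psubset_card_mono by blast
    show ?thesis
    proof (cases "diam_fin d W \<le> r")
      case True
      have "ball X d r t = W"
      proof
        show "W \<subseteq> ball X d r t" using rt_node_mem_iff[OF W_node tW] True by (auto simp: ball_def)
        show "ball X d r t \<subseteq> W"
        proof
          fix y assume "y \<in> ball X d r t"
          then have yX: "y \<in> X" and yt: "d y t \<le> r" by (auto simp: ball_def)
          then have "y \<in> Z" using rt_node_mem_iff[OF less.prems(1,2)] r_less by simp
          then show "y \<in> W" using yt r_less d_sym[OF tX yX] W_def by simp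
        qed
      qed
      then show ?thesis using W_node by simp
    next
      case False
      then show ?thesis using less.hyps[OF card_less W_node tW less.prems(3)] by simp
    qed
  qed
qed

lemma singleton_in_rt_nodes:
  assumes x: "x \<in> X"
  shows "{x} \<in> rt_nodes X d"
proof -
  have "0 \<le> diam_fin d X" using diam_fin_ge[OF finite x x, of d] d_eq_0_iff[OF x x] by simp
  then have "ball X d 0 x \<in> rt_nodes X d" by (rule ball_in_rt_nodes[OF rt_nodes.root x order_refl])
  moreover have "ball X d 0 x = {x}"
    using d_nonneg[OF _ x] d_eq_0_iff[OF _ x] x by (force simp: ball_def)
  ultimately show ?thesis by simp
qed

lemma rt_node_card_less_2_singleton:
  assumes A: "A \<in> rt_nodes X d" and "card A < 2"
  shows "\<exists>x\<in>X. A = {x}"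
proof -
  have "card A \<noteq> 0" using rt_node_nonempty[OF A] rt_node_finite[OF A] by simp
  then have "card A = 1" using \<open>card A < 2\<close> by linarith
  then obtain x where "A = {x}" by (rule card_1_singletonE)
  then show ?thesis using rt_node_subset[OF A] by blast
qed

lemma Balls_eq: "Balls X d = {A \<in> rt_nodes X d. 2 \<le> card A}"
proof
  show "Balls X d \<subseteq> {A \<in> rt_nodes X d. 2 \<le> card A}"
  proof
    fix A assume "A \<in> Balls X d"
    then obtain t x where t: "t \<in> X" "x \<in> X" "x \<noteq> t" and A: "A = ball X d (d x t) t"
      unfolding Balls_def Sp_at_def by auto
    have A_node: "A \<in> rt_nodes X d"
      using A ball_in_rt_nodes[OF rt_nodes.root t(1) d_nonneg[OF t(2,1)] diam_fin_ge[OF finite t(2,1)]]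
      by simp
    have "{x, t} \<subseteq> A" using A t d_eq_0_iff[OF t(1) t(1)] d_nonneg[OF t(2,1)] by (auto simp: ball_def)
    then have "card {x, t} \<le> card A" using card_mono[OF rt_node_finite[OF A_node]] by blast
    then show "A \<in> {A \<in> rt_nodes X d. 2 \<le> card A}" using A_node t(3) by simp
  qed
next
  show "{A \<in> rt_nodes X d. 2 \<le> card A} \<subseteq> Balls X d"
  proof
    fix A assume "A \<in> {A \<in> rt_nodes X d. 2 \<le> card A}"
    then have A: "A \<in> rt_nodes X d" and card: "2 \<le> card A" by auto
    obtain t where t: "t \<in> A" using rt_node_nonempty[OF A] by auto
    have AX: "A \<subseteq> X" and fA: "finite A" using rt_node_subset[OF A] rt_node_finite[OF A] .
    obtain y where y: "y \<in> A" "d t y = diam_fin d A" using diam_fin_attained_at[OF AX fA t] by blast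
    have tX: "t \<in> X" and yX: "y \<in> X" using t y AX by auto
    have "y \<noteq> t" using y(2) diam_fin_pos[OF AX fA card] d_eq_0_iff[OF tX tX] by auto
    moreover have "d y t = diam_fin d A" using d_sym[OF yX tX] y(2) by (rule trans)
    ultimately have "diam_fin d A \<in> Sp_at X d t"
      unfolding Sp_at_def using yX by (intro CollectI exI[of _ y]) auto
    then show "A \<in> Balls X d" unfolding Balls_def using rt_node_eq_ball[OF A t] tX by blast
  qed
qed

lemma rt_nodes_eq_Balls_Un: "rt_nodes X d = Balls X d \<union> (\<lambda>x. {x}) ` X"
proof -
  have "A \<in> (\<lambda>x. {x}) ` X" if "A \<in> rt_nodes X d" "\<not> 2 \<le> card A" for A
    using rt_node_card_less_2_singleton that by force
  then show ?thesis using Balls_eq singleton_in_rt_nodes by auto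
qed

lemma proper_subnode_in_child:
  assumes A: "A \<in> rt_nodes X d" and B: "B \<in> rt_nodes X d" and "B \<subset> A" and t: "t \<in> B"
  shows "2 \<le> card A" and "B \<subseteq> {y \<in> A. d t y < diam_fin d A}"
proof -
  obtain s where "s \<in> A" "s \<notin> B" using \<open>B \<subset> A\<close> by blast
  then have "{s, t} \<subseteq> A" using t \<open>B \<subset> A\<close> by blast
  then have "card {s, t} \<le> card A" by (rule card_mono[OF rt_node_finite[OF A]])
  then show "2 \<le> card A" using \<open>s \<notin> B\<close> t by (cases "s = t") auto
  have tA: "t \<in> A" using t \<open>B \<subset> A\<close> by blast
  have "diam_fin d B < diam_fin d A"
  proof (rule ccontr)
    assume "\<not> diam_fin d B < diam_fin d A"
    then have "A \<subseteq> B" using rt_node_mem_iff[OF A tA] rt_node_mem_iff[OF B t] by auto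
    then show False using \<open>B \<subset> A\<close> by blast
  qed
  moreover have "d t y \<le> diam_fin d B" if "y \<in> B" for y
  proof -
    have tX: "t \<in> X" and yX: "y \<in> X" using that t rt_node_subset[OF B] by auto
    have "d y t \<le> diam_fin d B" using rt_node_mem_iff[OF B t] that by blast
    then show ?thesis by (subst d_sym[OF tX yX])
  qed
  ultimately show "B \<subseteq> {y \<in> A. d t y < diam_fin d A}"
    using \<open>B \<subset> A\<close> by (force intro: order_le_less_trans)
qed

lemma rt_node_in_subtree:
  "A \<in> rt_nodes X d \<Longrightarrow> B \<in> rt_nodes X d \<Longrightarrow> B \<subseteq> A \<Longrightarrow> B \<in> rt_nodes A d"
proof (induction "card A" arbitrary: A rule: less_induct)
  case less
  show ?case
  proof (cases "B = A")
    case True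
    then show ?thesis by (simp add: rt_nodes.root)
  next
    case False
    then have "B \<subset> A" using less.prems(3) by blast
    obtain t where t: "t \<in> B" using rt_node_nonempty[OF less.prems(2)] by blast
    define W where "W = {y \<in> A. d t y < diam_fin d A}"
    have card: "2 \<le> card A" and BW: "B \<subseteq> W"
      using proper_subnode_in_child[OF less.prems(1,2) \<open>B \<subset> A\<close> t] W_def by auto
    have AX: "A \<subseteq> X" and tA: "t \<in> A" using rt_node_subset[OF less.prems(1)] t \<open>B \<subset> A\<close> by auto
    have W_child: "W \<in> rt_children d A" and "W \<subset> A" using rt_child_at[OF AX card tA] W_def by auto
    then have "card W < card A" using psubset_card_mono rt_node_finite[OF less.prems(1)] by blast
    moreover have "W \<in> rt_nodes X d" using rt_nodes.child[OF less.prems(1) W_child] .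
    ultimately have "B \<in> rt_nodes W d" using less.hyps less.prems(2) BW by blast
    moreover have "W \<in> rt_nodes A d" using rt_nodes.child[OF rt_nodes.root W_child] .
    ultimately show ?thesis by (rule rt_nodes_trans)
  qed
qed

lemma subset_iff_in_subtree:
  "A \<in> rt_nodes X d \<Longrightarrow> B \<in> rt_nodes X d \<Longrightarrow> B \<subseteq> A \<longleftrightarrow> B \<in> rt_nodes A d"
  using rt_node_in_subtree rt_nodes_subset by blast

lemma rt_children_iff_covers:
  assumes A: "A \<in> rt_nodes X d" and B: "B \<in> rt_nodes X d"
  shows "B \<in> rt_children d A \<longleftrightarrow> covers (rt_nodes X d) A B"
proof
  assume child: "B \<in> rt_children d A"
  have AX: "A \<subseteq> X" and card: "2 \<le> card A"
    using rt_node_subset[OF A] child by (auto simp: rt_children_def split: if_splits)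
  obtain s where s: "s \<in> A" and B_eq: "B = {y \<in> A. d s y < diam_fin d A}"
    using child rt_children_eq_image[OF card] by blast
  have sB: "s \<in> B" and "B \<subset> A" using rt_child_at[OF AX card s] B_eq by auto
  moreover have "C = B \<or> C = A" if C: "C \<in> rt_nodes X d" "B \<subseteq> C" "C \<subseteq> A" for C
  proof (cases "C = A")
    case False
    then have "C \<subseteq> B" using proper_subnode_in_child(2)[OF A C(1)] C(2,3) sB B_eq by blast
    then show ?thesis using C(2) by blast
  qed simp
  ultimately show "covers (rt_nodes X d) A B" unfolding covers_def by blast
next
  assume "covers (rt_nodes X d) A B"
  then have "B \<subset> A"
    and minimal: "\<And>C. C \<in> rt_nodes X d \<Longrightarrow> B \<subseteq> C \<Longrightarrow> C \<subseteq> A \<Longrightarrow> C = B \<or> C = A"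
    unfolding covers_def by blast+
  obtain t where t: "t \<in> B" using rt_node_nonempty[OF B] by blast
  define W where "W = {y \<in> A. d t y < diam_fin d A}"
  have card: "2 \<le> card A" and BW: "B \<subseteq> W"
    using proper_subnode_in_child[OF A B \<open>B \<subset> A\<close> t] W_def by auto
  have tA: "t \<in> A" using t \<open>B \<subset> A\<close> by blast
  have W_child: "W \<in> rt_children d A" and "W \<subset> A"
    using rt_child_at[OF rt_node_subset[OF A] card tA] W_def by auto
  then have "W = B" using minimal[OF rt_nodes.child[OF A W_child] BW] by blast
  then show "B \<in> rt_children d A" using W_child by simp
qed

end

definition rt_order_iso ::
  "'a set \<Rightarrow> ('a \<Rightarrow> 'a \<Rightarrow> real) \<Rightarrow> 'b set \<Rightarrow> ('b \<Rightarrow> 'b \<Rightarrow> real) \<Rightarrow> ('a set \<Rightarrow> 'b set) \<Rightarrow> bool"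
  where
  "rt_order_iso X d Y \<rho> \<psi> \<longleftrightarrow> bij_betw \<psi> (rt_nodes X d) (rt_nodes Y \<rho>) \<and> \<psi> X = Y \<and>
     (\<forall>A\<in>rt_nodes X d. \<forall>B\<in>rt_nodes X d. B \<subseteq> A \<longleftrightarrow> \<psi> B \<subseteq> \<psi> A)"

lemma rt_order_isoD:
  assumes "rt_order_iso X d Y \<rho> \<psi>"
  shows "inj_on \<psi> (rt_nodes X d)" and "\<psi> ` rt_nodes X d = rt_nodes Y \<rho>" and "\<psi> X = Y"
    and "A \<in> rt_nodes X d \<Longrightarrow> B \<in> rt_nodes X d \<Longrightarrow> B \<subseteq> A \<longleftrightarrow> \<psi> B \<subseteq> \<psi> A"
  using assms unfolding rt_order_iso_def bij_betw_def by blast+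

lemma preserves_balls_iff_image_Balls:
  assumes "bij_betw F X Y"
  shows "preserves_balls X d Y \<rho> F \<longleftrightarrow> image F ` Balls X d = Balls Y \<rho>"
proof -
  have inj: "inj_on F X" and surj: "Y = F ` X" using assms by (auto simp: bij_betw_def)
  have "W \<subseteq> F ` X" if "W \<in> Balls Y \<rho>" for W
    using that unfolding surj[symmetric] by (auto simp: Balls_def ball_def)
  then have image_vimage: "F ` (F -` W \<inter> X) = W" if "W \<in> Balls Y \<rho>" for W
    using that by blast
  have "Z \<subseteq> X" if "Z \<in> Balls X d" for Z using that by (auto simp: Balls_def ball_def)
  then have vimage_image: "F -` (F ` Z) \<inter> X = Z" if "Z \<in> Balls X d" for Z
    using inj_on_image_mem_iff[OF inj] that by blast
  show ?thesis
    unfolding preserves_balls_def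
  proof (intro iffI conjI ballI)
    assume h: "(\<forall>Z\<in>Balls X d. F ` Z \<in> Balls Y \<rho>) \<and> (\<forall>W\<in>Balls Y \<rho>. F -` W \<inter> X \<in> Balls X d)"
    show "image F ` Balls X d = Balls Y \<rho>"
    proof
      show "image F ` Balls X d \<subseteq> Balls Y \<rho>" using h by blast
      show "Balls Y \<rho> \<subseteq> image F ` Balls X d"
      proof
        fix W assume W: "W \<in> Balls Y \<rho>"
        then have "F -` W \<inter> X \<in> Balls X d" using h by blast
        then show "W \<in> image F ` Balls X d"
          by (rule image_eqI[where f = "image F", OF image_vimage[OF W, symmetric]])
      qed
    qed
  next
    assume h: "image F ` Balls X d = Balls Y \<rho>"
    fix Z assume "Z \<in> Balls X d"
    then show "F ` Z \<in> Balls Y \<rho>" unfolding h[symmetric] by (rule imageI)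
  next
    assume h: "image F ` Balls X d = Balls Y \<rho>"
    fix W assume "W \<in> Balls Y \<rho>"
    then obtain Z where "Z \<in> Balls X d" "W = F ` Z" unfolding h[symmetric] by blast
    then show "F -` W \<inter> X \<in> Balls X d" using vimage_image by simp
  qed
qed

locale ultrametric_pair = X: finite_ultrametric X d + Y: finite_ultrametric Y \<rho>
  for X :: "'a set" and d and Y :: "'b set" and \<rho>
begin

lemma tree_iso_subset_iff:
  assumes bij: "bij_betw \<phi> (rt_nodes X d) (rt_nodes Y \<rho>)"
    and children: "\<forall>A\<in>rt_nodes X d. \<forall>B\<in>rt_nodes X d. B \<in> rt_children d A \<longleftrightarrow> \<phi> B \<in> rt_children \<rho> (\<phi> A)"
    and A: "A \<in> rt_nodes X d" and B: "B \<in> rt_nodes X d"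
  shows "B \<subseteq> A \<longleftrightarrow> \<phi> B \<subseteq> \<phi> A"
proof -
  have inj: "inj_on \<phi> (rt_nodes X d)" and img: "\<phi> ` rt_nodes X d = rt_nodes Y \<rho>"
    using bij by (auto simp: bij_betw_def)
  have "B \<subseteq> A \<longleftrightarrow> B \<in> rt_nodes A d" using X.subset_iff_in_subtree[OF A B] .
  also have "\<dots> \<longleftrightarrow> \<phi> B \<in> \<phi> ` rt_nodes A d"
    using inj_on_image_mem_iff[OF inj B] rt_nodes_trans[OF _ A] by blast
  also have "\<dots> \<longleftrightarrow> \<phi> B \<in> rt_nodes (\<phi> A) \<rho>"
    using tree_iso_image_rt_nodes[OF bij _ A] children by blast
  also have "\<dots> \<longleftrightarrow> \<phi> B \<subseteq> \<phi> A" using Y.subset_iff_in_subtree A B img by blast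
  finally show ?thesis .
qed

lemma order_iso_children_iff:
  assumes bij: "bij_betw \<psi> (rt_nodes X d) (rt_nodes Y \<rho>)"
    and mono: "\<forall>A\<in>rt_nodes X d. \<forall>B\<in>rt_nodes X d. B \<subseteq> A \<longleftrightarrow> \<psi> B \<subseteq> \<psi> A"
    and A: "A \<in> rt_nodes X d" and B: "B \<in> rt_nodes X d"
  shows "B \<in> rt_children d A \<longleftrightarrow> \<psi> B \<in> rt_children \<rho> (\<psi> A)"
proof -
  have "\<psi> A \<in> rt_nodes Y \<rho>" "\<psi> B \<in> rt_nodes Y \<rho>" using bij A B by (auto simp: bij_betw_def)
  moreover have "covers (rt_nodes X d) A B \<longleftrightarrow> covers (rt_nodes Y \<rho>) (\<psi> A) (\<psi> B)"
    using covers_order_iso[OF bij _ A B] mono by blast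
  ultimately show ?thesis using X.rt_children_iff_covers[OF A B] Y.rt_children_iff_covers by blast
qed

lemma tree_iso_iff_rt_order_iso: "tree_iso X d Y \<rho> \<longleftrightarrow> (\<exists>\<psi>. rt_order_iso X d Y \<rho> \<psi>)"
proof -
  have "(\<forall>A\<in>rt_nodes X d. \<forall>B\<in>rt_nodes X d. B \<in> rt_children d A \<longleftrightarrow> \<psi> B \<in> rt_children \<rho> (\<psi> A))
    \<longleftrightarrow> (\<forall>A\<in>rt_nodes X d. \<forall>B\<in>rt_nodes X d. B \<subseteq> A \<longleftrightarrow> \<psi> B \<subseteq> \<psi> A)"
    if "bij_betw \<psi> (rt_nodes X d) (rt_nodes Y \<rho>)" for \<psi>
    using tree_iso_subset_iff[OF that] order_iso_children_iff[OF that] by blast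
  then show ?thesis unfolding tree_iso_def rt_order_iso_def by blast
qed

text \<open>Singletons are the minimal nodes, so an isomorphism of node families preserves them.\<close>
lemma rt_order_iso_singleton:
  assumes iso: "rt_order_iso X d Y \<rho> \<psi>" and x: "x \<in> X"
  shows "\<exists>y. \<psi> {x} = {y}"
proof -
  have x_node: "{x} \<in> rt_nodes X d" using X.singleton_in_rt_nodes[OF x] .
  then have x_img: "\<psi> {x} \<in> rt_nodes Y \<rho>" using rt_order_isoD(2)[OF iso] by blast
  then obtain y where y: "y \<in> \<psi> {x}" using Y.rt_node_nonempty by blast
  then have "{y} \<in> rt_nodes Y \<rho>" using Y.singleton_in_rt_nodes Y.rt_node_subset[OF x_img] by blast
  then obtain B where B: "B \<in> rt_nodes X d" "\<psi> B = {y}"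
    unfolding rt_order_isoD(2)[OF iso, symmetric] by blast
  then have "B \<subseteq> {x}" using rt_order_isoD(4)[OF iso x_node B(1)] y by simp
  then have "B = {x}" using X.rt_node_nonempty[OF B(1)] by blast
  then show ?thesis using B(2) by blast
qed

lemma rt_order_iso_induced_by_point_bij:
  assumes iso: "rt_order_iso X d Y \<rho> \<psi>"
  obtains F where "bij_betw F X Y" and "\<And>A. A \<in> rt_nodes X d \<Longrightarrow> \<psi> A = F ` A"
proof -
  note mono = rt_order_isoD(4)[OF iso] and img = rt_order_isoD(2)[OF iso]
  define F where "F x = the_elem (\<psi> {x})" for x
  have F: "\<psi> {x} = {F x}" if x: "x \<in> X" for x
  proof -
    obtain y where "\<psi> {x} = {y}" using rt_order_iso_singleton[OF iso x] ..
    then show ?thesis by (simp add: F_def)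
  qed
  have image_F: "\<psi> A = F ` A" if A: "A \<in> rt_nodes X d" for A
  proof
    show "F ` A \<subseteq> \<psi> A"
    proof
      fix y assume "y \<in> F ` A"
      then obtain x where x: "x \<in> A" "y = F x" by blast
      then have xX: "x \<in> X" using X.rt_node_subset[OF A] by blast
      have "\<psi> {x} \<subseteq> \<psi> A" using mono[OF A X.singleton_in_rt_nodes[OF xX]] x(1) by simp
      then show "y \<in> \<psi> A" using F[OF xX] x(2) by simp
    qed
  next
    show "\<psi> A \<subseteq> F ` A"
    proof
      fix y assume y: "y \<in> \<psi> A"
      have "\<psi> A \<in> rt_nodes Y \<rho>" using img A by blast
      then have "{y} \<in> rt_nodes Y \<rho>" using Y.singleton_in_rt_nodes Y.rt_node_subset y by blast
      then obtain B where B: "B \<in> rt_nodes X d" "\<psi> B = {y}" unfolding img[symmetric] by blast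
      obtain x where x: "x \<in> B" using X.rt_node_nonempty[OF B(1)] by blast
      then have xX: "x \<in> X" using X.rt_node_subset[OF B(1)] by blast
      have "\<psi> {x} \<subseteq> \<psi> B" using mono[OF B(1) X.singleton_in_rt_nodes[OF xX]] x by simp
      then have "F x = y" using F[OF xX] B(2) by simp
      moreover have "x \<in> A" using mono[OF A B(1)] B(2) y x by auto
      ultimately show "y \<in> F ` A" by blast
    qed
  qed
  have "inj_on F X"
  proof (rule inj_onI)
    fix x x' assume "x \<in> X" "x' \<in> X" "F x = F x'"
    then have "\<psi> {x} = \<psi> {x'}" using F by simp
    then show "x = x'"
      using inj_onD[OF rt_order_isoD(1)[OF iso]] X.singleton_in_rt_nodes \<open>x \<in> X\<close> \<open>x' \<in> X\<close>
      by blast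
  qed
  moreover have "F ` X = Y" using image_F[OF rt_nodes.root] rt_order_isoD(3)[OF iso] by simp
  ultimately show ?thesis using that image_F unfolding bij_betw_def by blast
qed

lemma rt_order_iso_image:
  assumes bij: "bij_betw F X Y" and img: "image F ` rt_nodes X d = rt_nodes Y \<rho>"
  shows "rt_order_iso X d Y \<rho> (image F)"
proof -
  have inj: "inj_on F X" and "F ` X = Y" using bij by (auto simp: bij_betw_def)
  show ?thesis
    unfolding rt_order_iso_def bij_betw_def
  proof (intro conjI ballI)
    show "inj_on (image F) (rt_nodes X d)"
      by (rule inj_on_subset[OF inj_on_image_Pow[OF inj]]) (use X.rt_node_subset in blast)
    fix A B assume "A \<in> rt_nodes X d" "B \<in> rt_nodes X d"
    then show "B \<subseteq> A \<longleftrightarrow> F ` B \<subseteq> F ` A"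
      using inj_on_image_subset_iff[OF inj] X.rt_node_subset by metis
  qed fact+
qed

lemma rt_order_iso_iff_point_bij:
  "(\<exists>\<psi>. rt_order_iso X d Y \<rho> \<psi>) \<longleftrightarrow> (\<exists>F. bij_betw F X Y \<and> image F ` rt_nodes X d = rt_nodes Y \<rho>)"
proof
  assume "\<exists>\<psi>. rt_order_iso X d Y \<rho> \<psi>"
  then obtain \<psi> where iso: "rt_order_iso X d Y \<rho> \<psi>" ..
  obtain F where F: "bij_betw F X Y" "\<And>A. A \<in> rt_nodes X d \<Longrightarrow> \<psi> A = F ` A"
    using rt_order_iso_induced_by_point_bij[OF iso] by blast
  have "image F ` rt_nodes X d = \<psi> ` rt_nodes X d" using F(2) by simp
  then show "\<exists>F. bij_betw F X Y \<and> image F ` rt_nodes X d = rt_nodes Y \<rho>"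
    using F(1) rt_order_isoD(2)[OF iso] by auto
next
  assume "\<exists>F. bij_betw F X Y \<and> image F ` rt_nodes X d = rt_nodes Y \<rho>"
  then show "\<exists>\<psi>. rt_order_iso X d Y \<rho> \<psi>" using rt_order_iso_image by blast
qed

lemma preserves_balls_iff_image_rt_nodes:
  assumes bij: "bij_betw F X Y"
  shows "preserves_balls X d Y \<rho> F \<longleftrightarrow> image F ` rt_nodes X d = rt_nodes Y \<rho>"
proof -
  have card: "card (F ` A) = card A" if "A \<in> rt_nodes X d" for A
    using bij X.rt_node_subset[OF that] by (auto simp: bij_betw_def intro: card_image inj_on_subset)
  have singletons: "image F ` (\<lambda>x. {x}) ` X = (\<lambda>y. {y}) ` Y"
    using bij by (auto simp: bij_betw_def image_image)
  have "image F ` Balls X d = Balls Y \<rho> \<longleftrightarrow> image F ` rt_nodes X d = rt_nodes Y \<rho>"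
  proof
    assume "image F ` Balls X d = Balls Y \<rho>"
    then show "image F ` rt_nodes X d = rt_nodes Y \<rho>"
      unfolding X.rt_nodes_eq_Balls_Un Y.rt_nodes_eq_Balls_Un image_Un singletons by simp
  next
    assume img: "image F ` rt_nodes X d = rt_nodes Y \<rho>"
    have "image F ` {A \<in> rt_nodes X d. 2 \<le> card A} = {W \<in> image F ` rt_nodes X d. 2 \<le> card W}"
      using card by auto
    then show "image F ` Balls X d = Balls Y \<rho>" unfolding X.Balls_eq Y.Balls_eq img .
  qed
  then show ?thesis by (simp only: preserves_balls_iff_image_Balls[OF bij])
qed

end

lemma in_U_finite_ultrametric: "in_U X d \<Longrightarrow> finite_ultrametric X d"
  unfolding in_U_def finite_ultrametric_def by blast

theorem theorem24:
  fixes X :: "'a set" and d :: "'a \<Rightarrow> 'a \<Rightarrow> real"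
    and Y :: "'b set" and \<rho> :: "'b \<Rightarrow> 'b \<Rightarrow> real"
  assumes "in_U X d" and "in_U Y \<rho>"
  shows "tree_iso X d Y \<rho> \<longleftrightarrow> (\<exists>F. bij_betw F X Y \<and> preserves_balls X d Y \<rho> F)"
proof -
  interpret ultrametric_pair X d Y \<rho>
    using assms by (simp add: ultrametric_pair_def in_U_finite_ultrametric)
  have "tree_iso X d Y \<rho> \<longleftrightarrow> (\<exists>\<psi>. rt_order_iso X d Y \<rho> \<psi>)"
    by (rule tree_iso_iff_rt_order_iso)
  also have "\<dots> \<longleftrightarrow> (\<exists>F. bij_betw F X Y \<and> image F ` rt_nodes X d = rt_nodes Y \<rho>)"
    by (rule rt_order_iso_iff_point_bij)
  also have "\<dots> \<longleftrightarrow> (\<exists>F. bij_betw F X Y \<and> preserves_balls X d Y \<rho> F)"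
    by (rule ex_cong) (rule preserves_balls_iff_image_rt_nodes[symmetric])
  finally show ?thesis .
qed

end
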